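(* Let $k$ be a field, $t\ge1$, $n_1,\dots,n_t\ge1$ and $a_1,\dots,a_t\ge1$ integers with $d=\sum_{s=1}^ta_s\ge2$. Let $K^{d(\mathbf a)}_{\mathbf n}$ be the $d(a_1,\dots,a_t)$-complete multipartite hypergraph. Then $R/I(K^{d(\mathbf a)}_{\mathbf n})$ has a linear resolution, and for $i\ge1$, $\beta_{i,j}(K^{d(\mathbf a)}_{\mathbf n})\ne0$ only if $j=i+(d-1)$.
   Context: $K^{d(\mathbf a)}_{\mathbf n}$ is the hypergraph on the disjoint union $B_1\sqcup\cdots\sqcup B_t$ ($|B_s|=n_s$) whose edges are all subsets $E$ with $|E\cap B_s|=a_s$ for every $s$. $R$ is the polynomial ring over $k$ with one variable per vertex; $I(\mathcal H)$ is generated by $\prod_{v\in E}x_v$, $E$ an edge; $\beta_{i,j}=\dim_k\mathrm{Tor}^R_i(R/I(\mathcal H),k)_j$. $R/I$ has a linear resolution if there is $c$ with $\beta_{i,j}=0$ for all $i\ge1$, $j\ne i+c-1$. *)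

theory Defs
  imports Complex_Main "HOL-Library.Function_Algebras"
begin

text \<open>
R = k[x_v : v in V].
A monomial of R is an exponent vector m :: nat => nat vanishing outside V.
Tor^R_i(R/I,k) is computed as the homology of (R/I) tensor K, where K is the
Koszul complex on the variables x_v, v in V (the standard free resolution of
k over R).  R tensor K_i has k-basis the pairs (m,F) (the element x^m e_F),
F a subset of V of size i, with internal degree |m| + |F|.
\<close>

type_synonym 'k kchain = "((nat \<Rightarrow> nat) \<times> nat set) \<Rightarrow> 'k"

definition fscale :: "'k::field \<Rightarrow> 'k kchain \<Rightarrow> 'k kchain" where
  "fscale a f = (\<lambda>x. a * f x)"

definition kbasis :: "nat set \<Rightarrow> nat \<Rightarrow> nat \<Rightarrow> ((nat \<Rightarrow> nat) \<times> nat set) set" where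
  "kbasis V i j = {(m, F). (\<forall>v. v \<notin> V \<longrightarrow> m v = 0) \<and> F \<subseteq> V \<and> card F = i
                         \<and> (\<Sum>v\<in>V. m v) + i = j}"

definition kchains :: "nat set \<Rightarrow> nat \<Rightarrow> nat \<Rightarrow> ('k::field) kchain set" where
  "kchains V i j = {c. \<forall>p. p \<notin> kbasis V i j \<longrightarrow> c p = 0}"

text \<open>Koszul differential: d(x^u e_G) = sum over v in G of
  (-1)^(number of w in G with w < v) x^u x_v e_(G - v).  Below, the coefficient of
  x^m e_F in d(c).\<close>
definition kdiff :: "nat set \<Rightarrow> ('k::field) kchain \<Rightarrow> 'k kchain" where
  "kdiff V c = (\<lambda>(m, F). \<Sum>v\<in>V - F.
      if 1 \<le> m v then (-1) ^ card {w\<in>F. w < v} * c (m(v := m v - 1), insert v F) else 0)"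

text \<open>The edge ideal I(H) = (x_E : E an edge).  A monomial lies in it iff it is
  divisible by some x_E; a polynomial lies in it iff all its monomials do.\<close>
definition in_edge_ideal :: "nat set set \<Rightarrow> (nat \<Rightarrow> nat) \<Rightarrow> bool" where
  "in_edge_ideal Edges m \<longleftrightarrow> (\<exists>E\<in>Edges. \<forall>v\<in>E. 1 \<le> m v)"

definition ideal_chains :: "nat set \<Rightarrow> nat set set \<Rightarrow> nat \<Rightarrow> nat \<Rightarrow> ('k::field) kchain set" where
  "ideal_chains V Edges i j =
     {c \<in> kchains V i j. \<forall>m F. c (m, F) \<noteq> 0 \<longrightarrow> in_edge_ideal Edges m}"

text \<open>Cycles of (R/I) tensor K in degree (i,j), lifted to R tensor K.\<close>
definition cycles_lift :: "nat set \<Rightarrow> nat set set \<Rightarrow> nat \<Rightarrow> nat \<Rightarrow> ('k::field) kchain set" where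
  "cycles_lift V Edges i j =
     {c \<in> kchains V i j. kdiff V c \<in> ideal_chains V Edges (i - 1) j}"

text \<open>Boundaries of (R/I) tensor K in degree (i,j), lifted to R tensor K.\<close>
definition bounds_lift :: "nat set \<Rightarrow> nat set set \<Rightarrow> nat \<Rightarrow> nat \<Rightarrow> ('k::field) kchain set" where
  "bounds_lift V Edges i j =
     {kdiff V c + b | c b. c \<in> kchains V (Suc i) j \<and> b \<in> ideal_chains V Edges i j}"

text \<open>beta_{i,j} = dim_k Tor_i(R/I(H), k)_j = dim (cycles / boundaries), for i >= 1.
  The type 'k is the field k.\<close>
definition betti :: "'k::field itself \<Rightarrow> nat set \<Rightarrow> nat set set \<Rightarrow> nat \<Rightarrow> nat \<Rightarrow> nat" where
  "betti _ V Edges i j =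
     vector_space.dim (fscale :: 'k \<Rightarrow> 'k kchain \<Rightarrow> 'k kchain) (cycles_lift V Edges i j)
   - vector_space.dim (fscale :: 'k \<Rightarrow> 'k kchain \<Rightarrow> 'k kchain) (bounds_lift V Edges i j)"

definition linear_resolution :: "'k::field itself \<Rightarrow> nat set \<Rightarrow> nat set set \<Rightarrow> bool" where
  "linear_resolution K V Edges \<longleftrightarrow>
     (\<exists>c::nat. \<forall>i\<ge>1. \<forall>j. j \<noteq> i + c - 1 \<longrightarrow> betti K V Edges i j = 0)"

text \<open>Complete multipartite hypergraph K^{d(a)}_n: blocks B_s (s < t) are consecutive
  intervals of naturals of length n s.\<close>
definition block :: "(nat \<Rightarrow> nat) \<Rightarrow> nat \<Rightarrow> nat set" where
  "block n s = {(\<Sum>r<s. n r) ..< (\<Sum>r<s. n r) + n s}"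

definition mp_vertices :: "nat \<Rightarrow> (nat \<Rightarrow> nat) \<Rightarrow> nat set" where
  "mp_vertices t n = (\<Union>s<t. block n s)"

definition mp_edges :: "nat \<Rightarrow> (nat \<Rightarrow> nat) \<Rightarrow> (nat \<Rightarrow> nat) \<Rightarrow> nat set set" where
  "mp_edges t n a = {E. E \<subseteq> mp_vertices t n \<and> (\<forall>s<t. card (E \<inter> block n s) = a s)}"

end

theory Submission
  imports Defs
begin

text \<open>
  Tor of R/I with k is computed by the Koszul complex, which splits into strands by multidegree.
  The strand of multidegree \<open>\<alpha>\<close> is the chain complex of the simplex on \<open>S = supp \<alpha>\<close>
  relative to the subcomplex of faces \<open>F\<close> with \<open>x\<^sup>\<alpha>\<^sup>-\<^sup>F \<in> I\<close>.
  If some vertex is a cone point of that subcomplex, the relative homology vanishes. Otherwise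
  \<open>\<alpha>\<close> is the indicator of \<open>S\<close>, and with \<open>X\<^sub>s = S \<inter> B\<^sub>s\<close> the subcomplex consists of the
  faces meeting each \<open>X\<^sub>s\<close> in at most \<open>|X\<^sub>s| - a\<^sub>s\<close> vertices: a join of skeleta of simplices,
  whose cycles are boundaries except on faces with \<open>|S| - d\<close> vertices (induction on the number
  of parts, slicing a cycle along the faces of the last part). The boundary map sends relative
  cycles on faces with \<open>i\<close> vertices to cycles of the subcomplex on faces with \<open>i - 1\<close> vertices,
  so the strand is exact in homological degree \<open>i\<close> unless \<open>|\<alpha>| = |S| = i + d - 1\<close>.
\<close>

definition face_sign :: "nat set \<Rightarrow> nat \<Rightarrow> 'k::comm_ring_1" where
  "face_sign F v = (-1) ^ card {w\<in>F. w < v}"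

text \<open>
  A chain of the simplex on a finite set \<open>S\<close> is represented by its coefficient function on faces;
  \<open>chain_boundary S f F\<close> is the coefficient of the face \<open>F\<close> in the boundary of \<open>f\<close>.
\<close>

definition chain_boundary :: "nat set \<Rightarrow> (nat set \<Rightarrow> 'k::comm_ring_1) \<Rightarrow> nat set \<Rightarrow> 'k" where
  "chain_boundary S f F = (\<Sum>v\<in>S - F. face_sign F v * f (insert v F))"

definition cone :: "nat \<Rightarrow> (nat set \<Rightarrow> 'k::comm_ring_1) \<Rightarrow> nat set \<Rightarrow> 'k" where
  "cone w f G = (if w \<in> G then face_sign (G - {w}) w * f (G - {w}) else 0)"

lemma face_sign_square: "face_sign F v * face_sign F v = (1::'k::comm_ring_1)"
  unfolding face_sign_def by (simp add: power_mult_distrib[symmetric])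

lemma face_sign_insert:
  assumes "v \<notin> F" "v \<noteq> w"
  shows "(face_sign (insert v F) w :: 'k::comm_ring_1) = (if v < w then -1 else 1) * face_sign F w"
proof -
  have "{x\<in>insert v F. x < w} = (if v < w then insert v {x\<in>F. x < w} else {x\<in>F. x < w})"
    by auto
  moreover have "finite {x\<in>F. x < w}" by (rule finite_subset[of _ "{..<w}"]) auto
  ultimately show ?thesis using assms unfolding face_sign_def by auto
qed

lemma face_sign_insert_swap:
  assumes "v \<notin> F" "w \<notin> F" "v \<noteq> w"
  shows "face_sign (insert w F) v * face_sign (insert v F) w = - (face_sign F v * face_sign F w :: 'k::comm_ring_1)"
  using face_sign_insert[of v F w, where 'k='k] face_sign_insert[of w F v, where 'k='k] assms
  by (cases "v < w") (simp_all add: algebra_simps)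

lemma chain_boundary_cong:
  "(\<And>v. v \<in> S - F \<Longrightarrow> f (insert v F) = g (insert v F)) \<Longrightarrow> chain_boundary S f F = chain_boundary S g F"
  unfolding chain_boundary_def by simp

lemma chain_boundary_add: "chain_boundary S (\<lambda>F. f F + g F) F = chain_boundary S f F + chain_boundary S g F"
  unfolding chain_boundary_def by (simp add: algebra_simps sum.distrib)

lemma chain_boundary_diff: "chain_boundary S (\<lambda>F. f F - g F) F = chain_boundary S f F - chain_boundary S g F"
  unfolding chain_boundary_def by (simp add: algebra_simps sum_subtractf)

lemma chain_boundary_nonzero:
  assumes "chain_boundary S f F \<noteq> 0"
  obtains v where "v \<in> S - F" "f (insert v F) \<noteq> 0"
  using assms unfolding chain_boundary_def by (metis (no_types, lifting) mult_zero_right sum.neutral)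

lemma chain_boundary_zero_chain [simp]: "chain_boundary S (\<lambda>_. 0) F = 0"
  unfolding chain_boundary_def by simp

lemma sum_offdiagonal_antisymmetric:
  fixes \<phi> :: "nat \<Rightarrow> nat \<Rightarrow> 'k::comm_ring_1"
  assumes "finite A" and anti: "\<And>v u. v \<in> A \<Longrightarrow> u \<in> A \<Longrightarrow> v \<noteq> u \<Longrightarrow> \<phi> v u = - \<phi> u v"
  shows "(\<Sum>v\<in>A. \<Sum>u\<in>A - {v}. \<phi> v u) = 0"
proof -
  define lower where "lower v u = (if u < v then \<phi> v u else 0)" for v u
  define upper where "upper v u = (if v < u then \<phi> v u else 0)" for v u
  have "(\<Sum>u\<in>A - {v}. \<phi> v u) = (\<Sum>u\<in>A. lower v u + upper v u)" for v
    unfolding lower_def upper_def using \<open>finite A\<close>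
    by (intro sum.mono_neutral_cong_left) auto
  then have "(\<Sum>v\<in>A. \<Sum>u\<in>A - {v}. \<phi> v u) = (\<Sum>v\<in>A. \<Sum>u\<in>A. lower v u) + (\<Sum>v\<in>A. \<Sum>u\<in>A. upper v u)"
    by (simp add: sum.distrib)
  also have "(\<Sum>v\<in>A. \<Sum>u\<in>A. upper v u) = (\<Sum>u\<in>A. \<Sum>v\<in>A. upper v u)"
    by (rule sum.swap)
  also have "\<dots> = (\<Sum>u\<in>A. \<Sum>v\<in>A. - lower u v)"
  proof (intro sum.cong refl)
    fix u v assume "u \<in> A" "v \<in> A"
    then show "upper v u = - lower u v"
      unfolding lower_def upper_def using anti[of v u] by auto
  qed
  finally show ?thesis by (simp add: sum_negf)
qed

lemma chain_boundary_boundary: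
  fixes f :: "nat set \<Rightarrow> 'k::comm_ring_1"
  assumes "finite S"
  shows "chain_boundary S (chain_boundary S f) F = 0"
proof -
  define \<phi> where "\<phi> v u = (face_sign F v * face_sign (insert v F) u * f (insert u (insert v F)) :: 'k)" for v u
  have "chain_boundary S (chain_boundary S f) F = (\<Sum>v\<in>S - F. \<Sum>u\<in>(S - F) - {v}. \<phi> v u)"
    unfolding chain_boundary_def \<phi>_def
  proof (intro sum.cong refl)
    fix v assume "v \<in> S - F"
    have "S - insert v F = (S - F) - {v}" by blast
    then show "face_sign F v * (\<Sum>u\<in>S - insert v F. face_sign (insert v F) u * f (insert u (insert v F)))
      = (\<Sum>u\<in>S - F - {v}. face_sign F v * face_sign (insert v F) u * f (insert u (insert v F)))"
      by (simp add: sum_distrib_left mult.assoc)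
  qed
  also have "\<dots> = 0"
  proof (rule sum_offdiagonal_antisymmetric)
    fix v u assume "v \<in> S - F" "u \<in> S - F" "v \<noteq> u"
    moreover have "insert u (insert v F) = insert v (insert u F)" by blast
    ultimately show "\<phi> v u = - \<phi> u v"
      unfolding \<phi>_def using face_sign_insert[of v F u, where 'k='k] face_sign_insert[of u F v, where 'k='k]
      by (cases "v < u") (simp_all add: algebra_simps)
  qed (use assms in simp)
  finally show ?thesis .
qed

lemma chain_boundary_cone:
  fixes f :: "nat set \<Rightarrow> 'k::comm_ring_1"
  assumes S: "finite S" and w: "w \<in> S" and F: "F \<subseteq> S"
  shows "chain_boundary S (cone w f) F + cone w (chain_boundary S f) F = f F"
proof (cases "w \<in> F")
  case False
  have "chain_boundary S (cone w f) F = (\<Sum>v\<in>S - F. if v = w then f F else 0)"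
    unfolding chain_boundary_def
  proof (intro sum.cong refl)
    fix v
    show "face_sign F v * cone w f (insert v F) = (if v = w then f F else 0)"
    proof (cases "v = w")
      case True
      then have "insert v F - {w} = F" using False by auto
      then show ?thesis using True by (simp add: cone_def mult.assoc[symmetric] face_sign_square)
    qed (use False in \<open>simp add: cone_def\<close>)
  qed
  also have "\<dots> = f F" using S w False by simp
  finally show ?thesis using False by (simp add: cone_def)
next
  case True
  define F0 where "F0 = F - {w}"
  have F0: "F = insert w F0" "w \<notin> F0" "S - F0 = insert w (S - F)" "w \<notin> S - F"
    using True w unfolding F0_def by auto
  have "cone w (chain_boundary S f) F
      = face_sign F0 w * (\<Sum>v\<in>insert w (S - F). face_sign F0 v * f (insert v F0))"
    unfolding cone_def chain_boundary_def F0(3)[symmetric] using True F0_def by simp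
  also have "\<dots> = face_sign F0 w * face_sign F0 w * f (insert w F0)
      + (\<Sum>v\<in>S - F. face_sign F0 w * face_sign F0 v * f (insert v F0))"
    using S F0(4) by (simp add: distrib_left sum_distrib_left mult.assoc)
  also have "\<dots> = f F + (\<Sum>v\<in>S - F. face_sign F0 w * face_sign F0 v * f (insert v F0))"
    unfolding face_sign_square F0(1) by simp
  finally have "cone w (chain_boundary S f) F
      = f F + (\<Sum>v\<in>S - F. face_sign F0 w * face_sign F0 v * f (insert v F0))" .
  moreover have "chain_boundary S (cone w f) F
      = (\<Sum>v\<in>S - F. - (face_sign F0 w * face_sign F0 v * f (insert v F0)))"
    unfolding chain_boundary_def
  proof (intro sum.cong refl)
    fix v assume v: "v \<in> S - F"
    then have "insert v F - {w} = insert v F0" "v \<noteq> w" "v \<notin> F0" using F0 by auto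
    then have "face_sign F v * cone w f (insert v F)
        = (face_sign (insert w F0) v * face_sign (insert v F0) w) * f (insert v F0)"
      unfolding cone_def F0(1) by (simp add: mult.assoc)
    then show "face_sign F v * cone w f (insert v F) = - (face_sign F0 w * face_sign F0 v * f (insert v F0))"
      using face_sign_insert_swap[of v F0 w, where 'k='k] \<open>v \<noteq> w\<close> \<open>v \<notin> F0\<close> F0(2)
      by (simp add: algebra_simps)
  qed
  ultimately show ?thesis by (simp add: sum_negf)
qed

lemma cycle_eq_boundary_of_cone:
  fixes z :: "nat set \<Rightarrow> 'k::comm_ring_1"
  assumes S: "finite S" and w: "w \<in> S"
    and cycle: "\<And>F. chain_boundary S z F = 0" and supp: "\<And>F. z F \<noteq> 0 \<Longrightarrow> F \<subseteq> S"
  shows "chain_boundary S (cone w z) F = z F"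
proof (cases "F \<subseteq> S")
  case True
  have "cone w (chain_boundary S z) F = 0" by (simp add: cone_def cycle)
  then show ?thesis using chain_boundary_cone[OF S w True, of z] by simp
next
  case False
  have "\<not> insert v F - {w} \<subseteq> S" for v
    using False w by blast
  then have "cone w z (insert v F) = 0" for v
    using supp unfolding cone_def by (metis mult_zero_right)
  then show ?thesis using False supp by (auto simp: chain_boundary_def)
qed

definition chain_supported :: "nat set set \<Rightarrow> (nat set \<Rightarrow> 'k::zero) \<Rightarrow> bool" where
  "chain_supported K f \<longleftrightarrow> (\<forall>F. f F \<noteq> 0 \<longrightarrow> F \<in> K)"

lemma chain_supportedD: "chain_supported K f \<Longrightarrow> f F \<noteq> 0 \<Longrightarrow> F \<in> K"
  unfolding chain_supported_def by blast

lemma face_sign_Un_greater: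
  assumes "\<forall>b\<in>B. v < b"
  shows "face_sign (A \<union> B) v = face_sign A v"
proof -
  have "{x \<in> A \<union> B. x < v} = {x \<in> A. x < v}" using assms by fastforce
  then show ?thesis unfolding face_sign_def by simp
qed

lemma chain_boundary_ordered_Un:
  assumes S: "finite S" and T: "finite T" and less: "\<And>x y. x \<in> S \<Longrightarrow> y \<in> T \<Longrightarrow> x < y"
    and A: "A \<subseteq> S" and B: "B \<subseteq> T"
    and vanish: "\<And>v. v \<in> T - B \<Longrightarrow> f (insert v (A \<union> B)) = 0"
  shows "chain_boundary (S \<union> T) f (A \<union> B) = chain_boundary S (\<lambda>A'. f (A' \<union> B)) A"
proof -
  have disj: "S \<inter> T = {}" using less by blast
  have split: "S \<union> T - (A \<union> B) = (S - A) \<union> (T - B)" using A B disj by blast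
  have "chain_boundary (S \<union> T) f (A \<union> B)
      = (\<Sum>v\<in>S - A. face_sign (A \<union> B) v * f (insert v (A \<union> B)))
      + (\<Sum>v\<in>T - B. face_sign (A \<union> B) v * f (insert v (A \<union> B)))"
    unfolding chain_boundary_def split by (rule sum.union_disjoint) (use S T disj in auto)
  also have "(\<Sum>v\<in>T - B. face_sign (A \<union> B) v * f (insert v (A \<union> B))) = 0"
    using vanish by simp
  also have "(\<Sum>v\<in>S - A. face_sign (A \<union> B) v * f (insert v (A \<union> B))) = chain_boundary S (\<lambda>A'. f (A' \<union> B)) A"
    unfolding chain_boundary_def
  proof (intro sum.cong refl)
    fix v assume "v \<in> S - A"
    then have "\<forall>b\<in>B. v < b" using B less by blast
    then show "face_sign (A \<union> B) v * f (insert v (A \<union> B)) = face_sign A v * f (insert v A \<union> B)"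
      by (simp add: face_sign_Un_greater)
  qed
  finally show ?thesis by simp
qed

lemma chain_supported_boundary:
  assumes down: "\<And>F H. F \<in> K \<Longrightarrow> H \<subseteq> F \<Longrightarrow> H \<in> K" and "chain_supported K f"
  shows "chain_supported K (chain_boundary S f)"
  unfolding chain_supported_def
proof (intro allI impI)
  fix F assume "chain_boundary S f F \<noteq> 0"
  then obtain v where "f (insert v F) \<noteq> 0" by (rule chain_boundary_nonzero)
  then show "F \<in> K" using down chain_supportedD[OF \<open>chain_supported K f\<close>] by blast
qed

definition skeleta_join :: "(nat \<Rightarrow> nat set) \<Rightarrow> (nat \<Rightarrow> nat) \<Rightarrow> nat \<Rightarrow> nat set set" where
  "skeleta_join X r t = {F. F \<subseteq> (\<Union>s<t. X s) \<and> (\<forall>s<t. card (F \<inter> X s) \<le> r s)}"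

locale ordered_parts =
  fixes X :: "nat \<Rightarrow> nat set" and r :: "nat \<Rightarrow> nat"
  assumes finite_part: "finite (X s)"
    and rank_le_card: "r s \<le> card (X s)"
    and parts_ordered: "s < s' \<Longrightarrow> x \<in> X s \<Longrightarrow> y \<in> X s' \<Longrightarrow> x < y"
begin

abbreviation "part_union t \<equiv> \<Union>s<t. X s"

abbreviation "faces t \<equiv> skeleta_join X r t"

lemma finite_part_union: "finite (part_union t)"
  using finite_part by blast

lemma part_union_Suc: "part_union (Suc t) = part_union t \<union> X t"
  by (auto simp: lessThan_Suc)

lemma part_union_less: "x \<in> part_union t \<Longrightarrow> y \<in> X t \<Longrightarrow> x < y"
  using parts_ordered by blast

lemma part_union_disjoint: "part_union t \<inter> X t = {}"
  using part_union_less by blast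

lemma faces_down_closed:
  assumes "F \<in> faces t" "H \<subseteq> F"
  shows "H \<in> faces t"
proof -
  have "card (H \<inter> X s) \<le> card (F \<inter> X s)" for s
    using finite_part[of s] assms(2) by (intro card_mono) auto
  then show ?thesis using assms unfolding skeleta_join_def by (blast intro: order.trans)
qed

lemma faces_Suc_iff:
  "F \<in> faces (Suc t) \<longleftrightarrow> F \<subseteq> part_union t \<union> X t \<and> F \<inter> part_union t \<in> faces t \<and> card (F \<inter> X t) \<le> r t"
proof -
  have "F \<inter> X s = (F \<inter> part_union t) \<inter> X s" if "s < t" for s
    using that by auto
  then show ?thesis unfolding skeleta_join_def part_union_Suc by (auto simp: less_Suc_eq)
qed

lemma lower_layer_cycle_is_boundary:
  fixes z :: "nat set \<Rightarrow> 'k::comm_ring_1"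
  assumes supp: "chain_supported (faces (Suc t)) z"
    and lower: "\<And>F. z F \<noteq> 0 \<Longrightarrow> card (F \<inter> X t) < r t"
    and cycle: "\<And>F. chain_boundary (part_union (Suc t)) z F = 0"
  shows "\<exists>g. chain_supported (faces (Suc t)) g \<and> (\<forall>F. z F = chain_boundary (part_union (Suc t)) g F)"
proof (cases "r t = 0")
  case True
  then have "z = (\<lambda>_. 0)" using lower by fastforce
  then show ?thesis by (auto simp: chain_supported_def)
next
  case False
  then obtain w where w: "w \<in> X t" using rank_le_card[of t] by fastforce
  have "chain_supported (faces (Suc t)) (cone w z)"
    unfolding chain_supported_def
  proof (intro allI impI)
    fix G assume "cone w z G \<noteq> 0"
    then have wG: "w \<in> G" and nz: "z (G - {w}) \<noteq> 0" unfolding cone_def by (auto split: if_splits)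
    then have "G - {w} \<in> faces (Suc t)" "card ((G - {w}) \<inter> X t) < r t"
      using supp lower chain_supportedD by auto
    moreover have "G \<inter> X t = insert w ((G - {w}) \<inter> X t)" "G \<inter> part_union t = (G - {w}) \<inter> part_union t"
      using w wG part_union_disjoint by auto
    ultimately show "G \<in> faces (Suc t)"
      unfolding faces_Suc_iff using w finite_part[of t] by (auto simp: card_insert_if)
  qed
  moreover have "z F = chain_boundary (part_union (Suc t)) (cone w z) F" for F
  proof (rule cycle_eq_boundary_of_cone[symmetric, OF finite_part_union _ cycle])
    show "w \<in> part_union (Suc t)" using w by blast
    show "z F \<noteq> 0 \<Longrightarrow> F \<subseteq> part_union (Suc t)" for F
      using supp unfolding chain_supported_def skeleta_join_def by blast
  qed
  ultimately show ?thesis by blast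
qed

lemma top_layer_vanishes:
  assumes supp: "chain_supported (faces (Suc t)) z" and F: "r t < card (F \<inter> X t)"
  shows "z F = 0"
  using chain_supportedD[OF supp, of F] F faces_Suc_iff by fastforce

text \<open>
  Induction step on the number of parts: each slice \<open>A \<mapsto> z (A \<union> B)\<close> of a cycle along a face
  \<open>B\<close> of the last part with \<open>r t\<close> vertices is a cycle of the smaller join, and the lift of
  fillings of all slices agrees with \<open>z\<close> on the faces meeting \<open>X t\<close> in \<open>r t\<close> vertices.
\<close>

definition slice :: "nat \<Rightarrow> (nat set \<Rightarrow> 'k::zero) \<Rightarrow> nat set \<Rightarrow> nat set \<Rightarrow> 'k" where
  "slice t z B A = (if A \<subseteq> part_union t then z (A \<union> B) else 0)"

definition lift :: "nat \<Rightarrow> (nat set \<Rightarrow> nat set \<Rightarrow> 'k::zero) \<Rightarrow> nat set \<Rightarrow> 'k" where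
  "lift t g F = (if F \<subseteq> part_union (Suc t) \<and> card (F \<inter> X t) = r t then g (F \<inter> X t) (F \<inter> part_union t) else 0)"

lemma slice_supported:
  assumes "chain_supported (faces (Suc t)) z" "B \<subseteq> X t"
  shows "chain_supported (faces t) (slice t z B)"
  unfolding chain_supported_def
proof (intro allI impI)
  fix A assume "slice t z B A \<noteq> 0"
  then have "A \<subseteq> part_union t" "A \<union> B \<in> faces (Suc t)"
    using chain_supportedD[OF assms(1)] unfolding slice_def by (auto split: if_splits)
  moreover have "(A \<union> B) \<inter> part_union t = A" using calculation(1) assms(2) part_union_disjoint[of t] by blast
  ultimately show "A \<in> faces t" unfolding faces_Suc_iff by simp
qed

lemma slice_nonzero:
  assumes "slice t z B A \<noteq> 0" "B \<subseteq> X t" "card B = r t"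
  shows "z (A \<union> B) \<noteq> 0" "card (A \<union> B) = card A + r t"
proof -
  have A: "A \<subseteq> part_union t" using assms(1) unfolding slice_def by (auto split: if_splits)
  then show "z (A \<union> B) \<noteq> 0" using assms(1) unfolding slice_def by simp
  show "card (A \<union> B) = card A + r t"
    using A assms(2,3) finite_subset[OF A finite_part_union] finite_subset[OF assms(2) finite_part]
      part_union_disjoint[of t]
    by (subst card_Un_disjoint) auto
qed

lemma slice_is_cycle:
  fixes z :: "nat set \<Rightarrow> 'k::comm_ring_1"
  assumes supp: "chain_supported (faces (Suc t)) z"
    and cycle: "\<And>F. chain_boundary (part_union (Suc t)) z F = 0"
    and B: "B \<subseteq> X t" "card B = r t"
  shows "chain_boundary (part_union t) (slice t z B) A = 0"
proof (cases "A \<subseteq> part_union t")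
  case False
  then show ?thesis unfolding chain_boundary_def slice_def by (intro sum.neutral) auto
next
  case True
  have "0 = chain_boundary (part_union t \<union> X t) z (A \<union> B)"
    using cycle by (simp add: part_union_Suc)
  also have "\<dots> = chain_boundary (part_union t) (\<lambda>A'. z (A' \<union> B)) A"
  proof (rule chain_boundary_ordered_Un[OF finite_part_union finite_part part_union_less True B(1)])
    fix v assume v: "v \<in> X t - B"
    have "insert v (A \<union> B) \<inter> X t = insert v B"
      using True B(1) v part_union_disjoint[of t] by auto
    then have "r t < card (insert v (A \<union> B) \<inter> X t)"
      using v B finite_subset[OF B(1) finite_part] by simp
    then show "z (insert v (A \<union> B)) = 0" by (rule top_layer_vanishes[OF supp])
  qed
  also have "\<dots> = chain_boundary (part_union t) (slice t z B) A"
    by (rule chain_boundary_cong) (use True in \<open>auto simp: slice_def\<close>)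
  finally show ?thesis by simp
qed

lemma lift_supported:
  assumes "\<And>B. B \<subseteq> X t \<Longrightarrow> card B = r t \<Longrightarrow> chain_supported (faces t) (g B)"
  shows "chain_supported (faces (Suc t)) (lift t g)"
  unfolding chain_supported_def
proof (intro allI impI)
  fix F assume "lift t g F \<noteq> 0"
  then have F: "F \<subseteq> part_union t \<union> X t" "card (F \<inter> X t) = r t"
    and "g (F \<inter> X t) (F \<inter> part_union t) \<noteq> 0"
    unfolding lift_def part_union_Suc by (auto split: if_splits)
  then have "F \<inter> part_union t \<in> faces t" using assms[of "F \<inter> X t"] chain_supportedD by blast
  then show "F \<in> faces (Suc t)" using F faces_Suc_iff by simp
qed

lemma chain_boundary_lift:
  fixes g :: "nat set \<Rightarrow> nat set \<Rightarrow> 'k::comm_ring_1"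
  assumes F: "F \<subseteq> part_union (Suc t)" "card (F \<inter> X t) = r t"
  shows "chain_boundary (part_union (Suc t)) (lift t g) F
    = chain_boundary (part_union t) (g (F \<inter> X t)) (F \<inter> part_union t)"
proof -
  define A where "A = F \<inter> part_union t"
  define B where "B = F \<inter> X t"
  have FAB: "F = A \<union> B" and AB: "A \<subseteq> part_union t" "B \<subseteq> X t" "card B = r t"
    using F unfolding A_def B_def part_union_Suc by auto
  have finB: "finite B" using AB(2) finite_part finite_subset by blast
  have "chain_boundary (part_union (Suc t)) (lift t g) F = chain_boundary (part_union t) (\<lambda>A'. lift t g (A' \<union> B)) A"
    unfolding FAB part_union_Suc
  proof (rule chain_boundary_ordered_Un[OF finite_part_union finite_part part_union_less AB(1,2)])
    fix v assume v: "v \<in> X t - B"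
    have "insert v (A \<union> B) \<inter> X t = insert v B" using AB v part_union_disjoint[of t] by auto
    then show "lift t g (insert v (A \<union> B)) = 0" using v AB finB unfolding lift_def by simp
  qed
  also have "\<dots> = chain_boundary (part_union t) (g B) A"
  proof (rule chain_boundary_cong)
    fix v assume "v \<in> part_union t - A"
    then have "(insert v A \<union> B) \<inter> X t = B" "(insert v A \<union> B) \<inter> part_union t = insert v A"
      "insert v A \<union> B \<subseteq> part_union (Suc t)"
      using AB part_union_disjoint[of t] by (auto simp: part_union_Suc)
    then show "lift t g (insert v A \<union> B) = g B (insert v A)" using AB unfolding lift_def by simp
  qed
  finally show ?thesis unfolding A_def B_def .
qed

lemma top_layer_reduction:
  fixes z :: "nat set \<Rightarrow> 'k::comm_ring_1" and R :: nat
  assumes IH: "\<And>y :: nat set \<Rightarrow> 'k. chain_supported (faces t) y \<Longrightarrow> (\<forall>A. y A \<noteq> 0 \<longrightarrow> card A \<noteq> R)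
      \<Longrightarrow> (\<forall>A. chain_boundary (part_union t) y A = 0)
      \<Longrightarrow> \<exists>g. chain_supported (faces t) g \<and> (\<forall>A. y A = chain_boundary (part_union t) g A)"
    and supp: "chain_supported (faces (Suc t)) z"
    and card: "\<And>F. z F \<noteq> 0 \<Longrightarrow> card F \<noteq> R + r t"
    and cycle: "\<And>F. chain_boundary (part_union (Suc t)) z F = 0"
  obtains G where "chain_supported (faces (Suc t)) G"
    and "\<And>F. F \<subseteq> part_union (Suc t) \<Longrightarrow> card (F \<inter> X t) = r t \<Longrightarrow> z F = chain_boundary (part_union (Suc t)) G F"
proof -
  have "\<exists>g. chain_supported (faces t) g \<and> (\<forall>A. slice t z B A = chain_boundary (part_union t) g A)"
    if B: "B \<subseteq> X t" "card B = r t" for B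
  proof (rule IH)
    show "chain_supported (faces t) (slice t z B)" using slice_supported[OF supp B(1)] .
    show "\<forall>A. slice t z B A \<noteq> 0 \<longrightarrow> card A \<noteq> R" using slice_nonzero[OF _ B] card by fastforce
    show "\<forall>A. chain_boundary (part_union t) (slice t z B) A = 0" using slice_is_cycle[OF supp cycle B] by blast
  qed
  then obtain g where g: "\<And>B. B \<subseteq> X t \<Longrightarrow> card B = r t \<Longrightarrow>
      chain_supported (faces t) (g B) \<and> (\<forall>A. slice t z B A = chain_boundary (part_union t) (g B) A)"
    by metis
  show thesis
  proof
    show "chain_supported (faces (Suc t)) (lift t g)" using g by (intro lift_supported) blast
  next
    fix F assume F: "F \<subseteq> part_union (Suc t)" "card (F \<inter> X t) = r t"
    have "z F = slice t z (F \<inter> X t) (F \<inter> part_union t)"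
      using F unfolding slice_def part_union_Suc by (auto intro: arg_cong[where f = z])
    also have "\<dots> = chain_boundary (part_union (Suc t)) (lift t g) F"
      using g[of "F \<inter> X t"] F chain_boundary_lift[OF F, of g] by simp
    finally show "z F = chain_boundary (part_union (Suc t)) (lift t g) F" .
  qed
qed

theorem cycle_is_boundary:
  fixes z :: "nat set \<Rightarrow> 'k::comm_ring_1"
  assumes "chain_supported (faces t) z" and "\<forall>F. z F \<noteq> 0 \<longrightarrow> card F \<noteq> (\<Sum>s<t. r s)"
    and "\<forall>F. chain_boundary (part_union t) z F = 0"
  shows "\<exists>g. chain_supported (faces t) g \<and> (\<forall>F. z F = chain_boundary (part_union t) g F)"
  using assms
proof (induction t arbitrary: z)
  case 0
  then have "z = (\<lambda>_. 0)" unfolding chain_supported_def skeleta_join_def by fastforce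
  then show ?case by (auto simp: chain_supported_def)
next
  case (Suc t)
  have card: "z F \<noteq> 0 \<Longrightarrow> card F \<noteq> (\<Sum>s<t. r s) + r t" for F
    using Suc.prems(2) by simp
  have cycle: "chain_boundary (part_union (Suc t)) z F = 0" for F
    using Suc.prems(3) by blast
  obtain G where G: "chain_supported (faces (Suc t)) G"
    and top: "\<And>F. F \<subseteq> part_union (Suc t) \<Longrightarrow> card (F \<inter> X t) = r t \<Longrightarrow> z F = chain_boundary (part_union (Suc t)) G F"
    using top_layer_reduction[OF Suc.IH Suc.prems(1) card cycle] by blast
  define z' where "z' F = z F - chain_boundary (part_union (Suc t)) G F" for F
  have "chain_supported (faces (Suc t)) (chain_boundary (part_union (Suc t)) G)"
    by (rule chain_supported_boundary[OF faces_down_closed G])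
  then have supp': "chain_supported (faces (Suc t)) z'"
    using Suc.prems(1) unfolding chain_supported_def z'_def by (metis diff_zero diff_0)
  have "chain_boundary (part_union (Suc t)) z' F = 0" for F
    unfolding z'_def chain_boundary_diff
    using cycle chain_boundary_boundary[OF finite_part_union] by simp
  moreover have "card (F \<inter> X t) < r t" if "z' F \<noteq> 0" for F
  proof -
    have "F \<in> faces (Suc t)" using chain_supportedD[OF supp' that] .
    moreover from this have "F \<subseteq> part_union (Suc t)" unfolding skeleta_join_def by blast
    ultimately show ?thesis using top[of F] that unfolding z'_def faces_Suc_iff
      by (auto simp: order.order_iff_strict)
  qed
  ultimately obtain g where g: "chain_supported (faces (Suc t)) g"
    and "\<forall>F. z' F = chain_boundary (part_union (Suc t)) g F"
    using lower_layer_cycle_is_boundary[OF supp'] by blast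
  then have "z F = chain_boundary (part_union (Suc t)) (\<lambda>F. G F + g F) F" for F
    unfolding chain_boundary_add z'_def by (metis diff_add_cancel add.commute)
  moreover have "chain_supported (faces (Suc t)) (\<lambda>F. G F + g F)"
    using G g unfolding chain_supported_def by (metis add_0)
  ultimately show ?case by blast
qed

end

definition relative_homology_vanishes :: "'k::comm_ring_1 itself \<Rightarrow> nat set \<Rightarrow> (nat set \<Rightarrow> bool) \<Rightarrow> nat \<Rightarrow> bool" where
  "relative_homology_vanishes _ S Q i \<longleftrightarrow>
     (\<forall>\<sigma> :: nat set \<Rightarrow> 'k. chain_supported {F. F \<subseteq> S \<and> card F = i} \<sigma>
        \<longrightarrow> (\<forall>F. F \<subseteq> S \<longrightarrow> \<not> Q F \<longrightarrow> chain_boundary S \<sigma> F = 0)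
        \<longrightarrow> (\<exists>g. chain_supported {F. F \<subseteq> S \<and> card F = Suc i} g
               \<and> (\<forall>F. F \<subseteq> S \<longrightarrow> \<not> Q F \<longrightarrow> \<sigma> F = chain_boundary S g F)))"

lemma relative_homology_vanishes_empty:
  assumes "1 \<le> i"
  shows "relative_homology_vanishes TYPE('k::comm_ring_1) {} Q i"
  unfolding relative_homology_vanishes_def
proof (intro allI impI)
  fix \<sigma> :: "nat set \<Rightarrow> 'k" assume "chain_supported {F. F \<subseteq> {} \<and> card F = i} \<sigma>"
  then have "\<sigma> = (\<lambda>_. 0)" using assms unfolding chain_supported_def by fastforce
  then show "\<exists>g. chain_supported {F. F \<subseteq> {} \<and> card F = Suc i} g
      \<and> (\<forall>F. F \<subseteq> {} \<longrightarrow> \<not> Q F \<longrightarrow> \<sigma> F = chain_boundary {} g F)"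
    by (intro exI[of _ "\<lambda>_. 0"]) (simp add: chain_supported_def)
qed

lemma relative_homology_vanishes_cong:
  assumes "\<And>F. F \<subseteq> S \<Longrightarrow> Q F \<longleftrightarrow> Q' F"
  shows "relative_homology_vanishes K S Q i \<longleftrightarrow> relative_homology_vanishes K S Q' i"
proof -
  have "(\<forall>F. F \<subseteq> S \<longrightarrow> \<not> Q F \<longrightarrow> P F) \<longleftrightarrow> (\<forall>F. F \<subseteq> S \<longrightarrow> \<not> Q' F \<longrightarrow> P F)" for P
    using assms by blast
  then show ?thesis unfolding relative_homology_vanishes_def by (simp only:)
qed

lemma relative_homology_vanishes_cone:
  assumes S: "finite S" and w: "w \<in> S" and cone: "\<And>F. F \<subseteq> S \<Longrightarrow> Q F \<Longrightarrow> Q (insert w F)"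
  shows "relative_homology_vanishes TYPE('k::comm_ring_1) S Q i"
  unfolding relative_homology_vanishes_def
proof (intro allI impI)
  fix \<sigma> :: "nat set \<Rightarrow> 'k"
  assume supp: "chain_supported {F. F \<subseteq> S \<and> card F = i} \<sigma>"
    and rel: "\<forall>F. F \<subseteq> S \<longrightarrow> \<not> Q F \<longrightarrow> chain_boundary S \<sigma> F = 0"
  have "chain_supported {F. F \<subseteq> S \<and> card F = Suc i} (cone w \<sigma>)"
    unfolding chain_supported_def
  proof (intro allI impI)
    fix G assume "cone w \<sigma> G \<noteq> 0"
    then have wG: "w \<in> G" and "\<sigma> (G - {w}) \<noteq> 0" unfolding cone_def by (auto split: if_splits)
    then have G: "G - {w} \<subseteq> S" "card (G - {w}) = i" using chain_supportedD[OF supp] by auto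
    then have "finite G" using S finite_subset by fastforce
    then have "card G = Suc i" using card_Suc_Diff1[OF _ wG] G(2) by simp
    then show "G \<in> {F. F \<subseteq> S \<and> card F = Suc i}" using G(1) w by auto
  qed
  moreover have "\<sigma> F = chain_boundary S (cone w \<sigma>) F" if F: "F \<subseteq> S" "\<not> Q F" for F
  proof -
    have "cone w (chain_boundary S \<sigma>) F = 0"
    proof (cases "w \<in> F")
      case True
      then have "\<not> Q (F - {w})" using cone[of "F - {w}"] F by (auto simp: insert_absorb)
      moreover have "F - {w} \<subseteq> S" using F by blast
      ultimately show ?thesis using rel by (simp add: cone_def)
    qed (simp add: cone_def)
    then show ?thesis using chain_boundary_cone[OF S w F(1), of \<sigma>] by simp
  qed
  ultimately show "\<exists>g. chain_supported {F. F \<subseteq> S \<and> card F = Suc i} g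
      \<and> (\<forall>F. F \<subseteq> S \<longrightarrow> \<not> Q F \<longrightarrow> \<sigma> F = chain_boundary S g F)" by blast
qed

lemma chain_boundary_nonzero_card:
  assumes "finite S" "chain_supported {F. F \<subseteq> S \<and> card F = Suc i} g" "chain_boundary S g F \<noteq> 0"
  shows "F \<subseteq> S" "card F = i"
proof -
  obtain v where v: "v \<in> S - F" "g (insert v F) \<noteq> 0" using assms(3) by (rule chain_boundary_nonzero)
  then have "insert v F \<subseteq> S" "card (insert v F) = Suc i" using chain_supportedD[OF assms(2)] by auto
  then show "F \<subseteq> S" "card F = i" using v(1) assms(1) by (auto simp: finite_subset)
qed

lemma simplex_cycle_is_boundary:
  fixes \<delta> :: "nat set \<Rightarrow> 'k::comm_ring_1"
  assumes S: "finite S" and w: "w \<in> S"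
    and cycle: "\<And>F. chain_boundary S \<delta> F = 0" and supp: "\<And>F. \<delta> F \<noteq> 0 \<Longrightarrow> F \<subseteq> S"
  obtains g where "chain_supported {F. F \<subseteq> S \<and> card F = Suc i} g"
    and "\<And>F. F \<subseteq> S \<Longrightarrow> card F = i \<Longrightarrow> \<delta> F = chain_boundary S g F"
proof
  define g where "g G = (if card G = Suc i then cone w \<delta> G else 0)" for G
  show "chain_supported {F. F \<subseteq> S \<and> card F = Suc i} g"
    unfolding chain_supported_def
  proof (intro allI impI)
    fix G assume "g G \<noteq> 0"
    then have "card G = Suc i" "w \<in> G" "\<delta> (G - {w}) \<noteq> 0" unfolding g_def cone_def by (auto split: if_splits)
    then show "G \<in> {F. F \<subseteq> S \<and> card F = Suc i}" using supp w by blast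
  qed
  fix F assume F: "F \<subseteq> S" "card F = i"
  have "chain_boundary S g F = chain_boundary S (cone w \<delta>) F"
    by (rule chain_boundary_cong) (use F S in \<open>auto simp: g_def finite_subset\<close>)
  then show "\<delta> F = chain_boundary S g F" using cycle_eq_boundary_of_cone[OF S w cycle supp] by simp
qed

lemma relative_homology_vanishes_acyclic_subcomplex:
  fixes R :: nat
  assumes S: "finite S" and w: "w \<in> S" and i: "1 \<le> i" "i - 1 \<noteq> R"
    and acyclic: "\<And>z :: nat set \<Rightarrow> 'k. chain_supported {F. F \<subseteq> S \<and> Q F} z \<Longrightarrow> \<forall>F. z F \<noteq> 0 \<longrightarrow> card F \<noteq> R
       \<Longrightarrow> \<forall>F. chain_boundary S z F = 0
       \<Longrightarrow> \<exists>\<gamma>. chain_supported {F. F \<subseteq> S \<and> Q F} \<gamma> \<and> (\<forall>F. z F = chain_boundary S \<gamma> F)"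
  shows "relative_homology_vanishes TYPE('k::comm_ring_1) S Q i"
  unfolding relative_homology_vanishes_def
proof (intro allI impI)
  fix \<sigma> :: "nat set \<Rightarrow> 'k"
  assume supp: "chain_supported {F. F \<subseteq> S \<and> card F = i} \<sigma>"
    and rel: "\<forall>F. F \<subseteq> S \<longrightarrow> \<not> Q F \<longrightarrow> chain_boundary S \<sigma> F = 0"
  have bd: "F \<subseteq> S \<and> card F = i - 1" if "chain_boundary S \<sigma> F \<noteq> 0" for F
    using chain_boundary_nonzero_card[OF S _ that, of "i - 1"] supp i(1) by simp
  have "chain_supported {F. F \<subseteq> S \<and> Q F} (chain_boundary S \<sigma>)"
    unfolding chain_supported_def
  proof (intro allI impI)
    fix F assume "chain_boundary S \<sigma> F \<noteq> 0"
    then show "F \<in> {F. F \<subseteq> S \<and> Q F}" using bd rel by blast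
  qed
  moreover have "\<forall>F. chain_boundary S \<sigma> F \<noteq> 0 \<longrightarrow> card F \<noteq> R" using bd i(2) by auto
  moreover have "\<forall>F. chain_boundary S (chain_boundary S \<sigma>) F = 0" using chain_boundary_boundary[OF S] by blast
  ultimately have "\<exists>\<gamma>. chain_supported {F. F \<subseteq> S \<and> Q F} \<gamma>
      \<and> (\<forall>F. chain_boundary S \<sigma> F = chain_boundary S \<gamma> F)"
    by (rule acyclic)
  then obtain \<gamma> where \<gamma>: "chain_supported {F. F \<subseteq> S \<and> Q F} \<gamma>"
    and bd\<gamma>: "\<forall>F. chain_boundary S \<sigma> F = chain_boundary S \<gamma> F"
    by blast
  define \<delta> where "\<delta> F = \<sigma> F - \<gamma> F" for F
  have \<delta>_supp: "\<delta> F \<noteq> 0 \<Longrightarrow> F \<subseteq> S" for F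
    using chain_supportedD[OF supp, of F] chain_supportedD[OF \<gamma>, of F] unfolding \<delta>_def
    by (cases "\<sigma> F = 0") auto
  have \<delta>_cycle: "chain_boundary S \<delta> F = 0" for F
    unfolding \<delta>_def chain_boundary_diff using bd\<gamma> by simp
  obtain g where g: "chain_supported {F. F \<subseteq> S \<and> card F = Suc i} g"
    and \<delta>: "\<And>F. F \<subseteq> S \<Longrightarrow> card F = i \<Longrightarrow> \<delta> F = chain_boundary S g F"
    using simplex_cycle_is_boundary[OF S w \<delta>_cycle \<delta>_supp, of i] by blast
  have "\<sigma> F = chain_boundary S g F" if F: "F \<subseteq> S" "\<not> Q F" for F
  proof (cases "card F = i")
    case True
    moreover have "\<gamma> F = 0" using chain_supportedD[OF \<gamma>] F by blast
    ultimately show ?thesis using \<delta>[OF F(1)] unfolding \<delta>_def by simp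
  next
    case False
    then have "\<sigma> F = 0" "chain_boundary S g F = 0"
      using chain_supportedD[OF supp, of F] chain_boundary_nonzero_card(2)[OF S g, of F] by auto
    then show ?thesis by simp
  qed
  with g show "\<exists>g. chain_supported {F. F \<subseteq> S \<and> card F = Suc i} g
      \<and> (\<forall>F. F \<subseteq> S \<longrightarrow> \<not> Q F \<longrightarrow> \<sigma> F = chain_boundary S g F)" by blast
qed

definition exponent_support :: "(nat \<Rightarrow> nat) \<Rightarrow> nat set" where
  "exponent_support \<alpha> = {v. 1 \<le> \<alpha> v}"

definition minus_face :: "(nat \<Rightarrow> nat) \<Rightarrow> nat set \<Rightarrow> nat \<Rightarrow> nat" where
  "minus_face \<alpha> F = (\<lambda>v. \<alpha> v - (if v \<in> F then 1 else 0))"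

definition plus_face :: "(nat \<Rightarrow> nat) \<Rightarrow> nat set \<Rightarrow> nat \<Rightarrow> nat" where
  "plus_face m F = (\<lambda>v. m v + (if v \<in> F then 1 else 0))"

text \<open>
  The basis element \<open>x\<^sup>\<alpha>\<^sup>-\<^sup>F e\<^sub>F\<close> of the multidegree \<open>\<alpha>\<close> part of the Koszul complex is
  identified with the face \<open>F\<close> of the simplex on \<open>exponent_support \<alpha>\<close>.
\<close>

definition strand :: "'k kchain \<Rightarrow> (nat \<Rightarrow> nat) \<Rightarrow> nat set \<Rightarrow> 'k::zero" where
  "strand c \<alpha> F = (if F \<subseteq> exponent_support \<alpha> then c (minus_face \<alpha> F, F) else 0)"

lemma minus_plus_face [simp]: "minus_face (plus_face m F) F = m"
  unfolding minus_face_def plus_face_def by auto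

lemma plus_minus_face: "F \<subseteq> exponent_support \<alpha> \<Longrightarrow> plus_face (minus_face \<alpha> F) F = \<alpha>"
  unfolding minus_face_def plus_face_def exponent_support_def by (auto simp: fun_eq_iff)

lemma face_subset_exponent_support: "F \<subseteq> exponent_support (plus_face m F)"
  unfolding plus_face_def exponent_support_def by auto

lemma sum_plus_face: "finite V \<Longrightarrow> F \<subseteq> V \<Longrightarrow> (\<Sum>v\<in>V. plus_face m F v) = (\<Sum>v\<in>V. m v) + card F"
  unfolding plus_face_def by (simp add: sum.distrib sum.If_cases Int_absorb1)

lemma exponent_support_subset: "\<forall>v. v \<notin> V \<longrightarrow> \<alpha> v = 0 \<Longrightarrow> exponent_support \<alpha> \<subseteq> V"
  unfolding exponent_support_def by auto

lemma kdiff_strand: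
  fixes c :: "'k::field kchain"
  assumes V: "finite V" and \<alpha>: "\<forall>v. v \<notin> V \<longrightarrow> \<alpha> v = 0" and F: "F \<subseteq> exponent_support \<alpha>"
  shows "kdiff V c (minus_face \<alpha> F, F) = chain_boundary (exponent_support \<alpha>) (strand c \<alpha>) F"
proof -
  have "kdiff V c (minus_face \<alpha> F, F)
      = (\<Sum>v\<in>V - F. if v \<in> exponent_support \<alpha> then face_sign F v * strand c \<alpha> (insert v F) else 0)"
    unfolding kdiff_def prod.case
  proof (intro sum.cong refl)
    fix v assume v: "v \<in> V - F"
    then have "(minus_face \<alpha> F)(v := minus_face \<alpha> F v - 1) = minus_face \<alpha> (insert v F)"
      "minus_face \<alpha> F v = \<alpha> v"
      unfolding minus_face_def by (auto simp: fun_eq_iff)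
    then show "(if 1 \<le> minus_face \<alpha> F v then (- 1) ^ card {w \<in> F. w < v}
          * c ((minus_face \<alpha> F)(v := minus_face \<alpha> F v - 1), insert v F) else 0)
        = (if v \<in> exponent_support \<alpha> then face_sign F v * strand c \<alpha> (insert v F) else 0)"
      using F unfolding face_sign_def strand_def exponent_support_def by auto
  qed
  also have "\<dots> = (\<Sum>v\<in>exponent_support \<alpha> - F. face_sign F v * strand c \<alpha> (insert v F))"
  proof -
    have "exponent_support \<alpha> \<inter> (V - F) = exponent_support \<alpha> - F" using exponent_support_subset[OF \<alpha>] by blast
    then show ?thesis using V by (simp add: sum.If_cases Int_commute)
  qed
  finally show ?thesis unfolding chain_boundary_def .
qed

lemma kdiff_nonzero:
  assumes "kdiff V c (m, F) \<noteq> 0"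
  obtains v where "v \<in> V - F" "1 \<le> m v" "c (m(v := m v - 1), insert v F) \<noteq> 0"
proof -
  have "\<exists>v\<in>V - F. (if 1 \<le> m v then (-1) ^ card {w\<in>F. w < v} * c (m(v := m v - 1), insert v F) else 0) \<noteq> 0"
  proof (rule ccontr)
    assume "\<not> ?thesis"
    then have "kdiff V c (m, F) = 0" unfolding kdiff_def prod.case by (intro sum.neutral) blast
    then show False using assms by contradiction
  qed
  then show thesis using that by (auto split: if_splits)
qed

lemma kdiff_add: "kdiff V (f + g) = kdiff V f + (kdiff V g :: 'k::field kchain)"
  unfolding kdiff_def by (auto simp: fun_eq_iff sum.distrib[symmetric] algebra_simps intro!: sum.cong)

lemma kbasis_insert:
  assumes V: "finite V" and v: "v \<in> V - F" "1 \<le> m v"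
    and kb: "(m(v := m v - 1), insert v F) \<in> kbasis V (Suc i) j"
  shows "(m, F) \<in> kbasis V i j"
proof -
  have m: "m = plus_face (m(v := m v - 1)) {v}"
    using v unfolding plus_face_def by (auto simp: fun_eq_iff)
  have "finite F" using kb V unfolding kbasis_def by (auto intro: finite_subset)
  then show ?thesis
    using kb v sum_plus_face[OF V, of "{v}" "m(v := m v - 1)"] m[symmetric]
    unfolding kbasis_def by (auto split: if_splits)
qed

lemma kdiff_kchains:
  assumes V: "finite V" and c: "c \<in> kchains V (Suc i) j"
  shows "kdiff V (c :: 'k::field kchain) \<in> kchains V i j"
  unfolding kchains_def
proof (safe)
  fix m F assume nb: "(m, F) \<notin> kbasis V i j"
  show "kdiff V c (m, F) = 0"
  proof (rule ccontr)
    assume "kdiff V c (m, F) \<noteq> 0"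
    then obtain v where v: "v \<in> V - F" "1 \<le> m v" and "c (m(v := m v - 1), insert v F) \<noteq> 0"
      by (rule kdiff_nonzero)
    then have "(m(v := m v - 1), insert v F) \<in> kbasis V (Suc i) j"
      using c unfolding kchains_def by blast
    then show False using kbasis_insert[OF V, of v F m] v nb by blast
  qed
qed

lemma kdiff_kdiff:
  assumes V: "finite V" and c: "c \<in> kchains V (Suc (Suc i)) j"
  shows "kdiff V (kdiff V (c :: 'k::field kchain)) = 0"
proof
  fix p :: "(nat \<Rightarrow> nat) \<times> nat set"
  obtain m F where p: "p = (m, F)" by fastforce
  show "kdiff V (kdiff V c) p = 0 p"
  proof (cases "p \<in> kbasis V i j")
    case False
    then show ?thesis using kdiff_kchains[OF V kdiff_kchains[OF V c]] unfolding kchains_def p by simp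
  next
    case True
    then have FV: "F \<subseteq> V" and mV: "\<forall>v. v \<notin> V \<longrightarrow> m v = 0"
      unfolding p kbasis_def by auto
    define \<alpha> where "\<alpha> = plus_face m F"
    have \<alpha>: "\<forall>v. v \<notin> V \<longrightarrow> \<alpha> v = 0" using mV FV unfolding \<alpha>_def plus_face_def by auto
    have F: "F \<subseteq> exponent_support \<alpha>" unfolding \<alpha>_def by (rule face_subset_exponent_support)
    have S: "finite (exponent_support \<alpha>)" using exponent_support_subset[OF \<alpha>] V by (rule finite_subset)
    have "kdiff V (kdiff V c) p = chain_boundary (exponent_support \<alpha>) (strand (kdiff V c) \<alpha>) F"
      using kdiff_strand[OF V \<alpha> F] unfolding p \<alpha>_def by simp
    also have "\<dots> = chain_boundary (exponent_support \<alpha>) (chain_boundary (exponent_support \<alpha>) (strand c \<alpha>)) F"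
    proof (rule chain_boundary_cong)
      fix v assume "v \<in> exponent_support \<alpha> - F"
      then have vF: "insert v F \<subseteq> exponent_support \<alpha>" using F by blast
      then show "strand (kdiff V c) \<alpha> (insert v F) = chain_boundary (exponent_support \<alpha>) (strand c \<alpha>) (insert v F)"
        using kdiff_strand[OF V \<alpha> vF, of c] unfolding strand_def[of "kdiff V c"] by simp
    qed
    also have "\<dots> = 0" by (rule chain_boundary_boundary[OF S])
    finally show ?thesis by simp
  qed
qed

lemma in_edge_ideal_mono:
  "in_edge_ideal E m \<Longrightarrow> (\<And>u. 1 \<le> m u \<Longrightarrow> 1 \<le> m' u) \<Longrightarrow> in_edge_ideal E m'"
  unfolding in_edge_ideal_def by blast

lemma bounds_lift_subset_cycles_lift:
  assumes V: "finite V" and i: "1 \<le> i"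
  shows "bounds_lift V E i j \<subseteq> (cycles_lift V E i j :: 'k::field kchain set)"
proof
  fix x :: "'k kchain" assume "x \<in> bounds_lift V E i j"
  then obtain c b where x: "x = kdiff V c + b" and c: "c \<in> kchains V (Suc i) j"
    and b: "b \<in> ideal_chains V E i j" unfolding bounds_lift_def by blast
  have bk: "b \<in> kchains V i j" using b unfolding ideal_chains_def by blast
  have xk: "x \<in> kchains V i j"
    using kdiff_kchains[OF V c] bk unfolding x kchains_def by auto
  have i1: "Suc (i - 1) = i" using i by simp
  have "kdiff V (kdiff V c) = 0" using kdiff_kdiff[OF V, of c "i - 1"] c i1 by simp
  then have dx: "kdiff V x = kdiff V b" unfolding x kdiff_add by simp
  have "kdiff V b \<in> ideal_chains V E (i - 1) j"
    unfolding ideal_chains_def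
  proof (intro CollectI conjI allI impI)
    show "kdiff V b \<in> kchains V (i - 1) j" by (rule kdiff_kchains[OF V]) (use bk i1 in simp)
    fix m F assume "kdiff V b (m, F) \<noteq> 0"
    then obtain v where "1 \<le> m v" "b (m(v := m v - 1), insert v F) \<noteq> 0"
      by (rule kdiff_nonzero)
    then have "in_edge_ideal E (m(v := m v - 1))" using b unfolding ideal_chains_def by blast
    then show "in_edge_ideal E m" by (rule in_edge_ideal_mono) (auto split: if_splits)
  qed
  then show "x \<in> cycles_lift V E i j" unfolding cycles_lift_def using xk dx by simp
qed

definition is_multidegree :: "nat set \<Rightarrow> nat \<Rightarrow> (nat \<Rightarrow> nat) \<Rightarrow> bool" where
  "is_multidegree V j \<alpha> \<longleftrightarrow> (\<forall>v. v \<notin> V \<longrightarrow> \<alpha> v = 0) \<and> (\<Sum>v\<in>V. \<alpha> v) = j"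

definition glue_strands :: "nat set \<Rightarrow> nat \<Rightarrow> ((nat \<Rightarrow> nat) \<Rightarrow> nat set \<Rightarrow> 'k::zero) \<Rightarrow> 'k kchain" where
  "glue_strands V j g p =
     (if is_multidegree V j (plus_face (fst p) (snd p)) then g (plus_face (fst p) (snd p)) (snd p) else 0)"

lemma kbasis_imp_multidegree:
  assumes "finite V" "(m, F) \<in> kbasis V i j"
  shows "is_multidegree V j (plus_face m F)"
  using assms sum_plus_face[OF assms(1), of F m] unfolding kbasis_def is_multidegree_def plus_face_def by auto

lemma strand_glue_strands:
  assumes "is_multidegree V j \<alpha>" "H \<subseteq> exponent_support \<alpha>"
  shows "strand (glue_strands V j g) \<alpha> H = g \<alpha> H"
  using assms plus_minus_face[OF assms(2)] unfolding strand_def glue_strands_def by simp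

lemma glue_strands_kchains:
  assumes V: "finite V"
    and g: "\<And>\<alpha>. is_multidegree V j \<alpha> \<Longrightarrow> chain_supported {F. F \<subseteq> exponent_support \<alpha> \<and> card F = Suc i} (g \<alpha>)"
  shows "glue_strands V j g \<in> kchains V (Suc i) j"
proof -
  have "(m, F) \<in> kbasis V (Suc i) j" if "glue_strands V j g (m, F) \<noteq> 0" for m F
  proof -
    from that have \<alpha>: "is_multidegree V j (plus_face m F)" and "g (plus_face m F) F \<noteq> 0"
      unfolding glue_strands_def by (auto split: if_splits)
    then have "F \<subseteq> exponent_support (plus_face m F)" "card F = Suc i"
      using g chain_supportedD by blast+
    moreover have FV: "F \<subseteq> V"
      using calculation(1) \<alpha> exponent_support_subset unfolding is_multidegree_def by blast
    ultimately show "(m, F) \<in> kbasis V (Suc i) j"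
      using \<alpha> sum_plus_face[OF V FV, of m] unfolding is_multidegree_def kbasis_def plus_face_def by auto
  qed
  then show ?thesis unfolding kchains_def by fastforce
qed

lemma cycles_lift_subset_bounds_lift:
  assumes V: "finite V"
    and strands: "\<And>\<alpha>. is_multidegree V j \<alpha> \<Longrightarrow>
       relative_homology_vanishes TYPE('k) (exponent_support \<alpha>) (\<lambda>F. in_edge_ideal E (minus_face \<alpha> F)) i"
  shows "cycles_lift V E i j \<subseteq> (bounds_lift V E i j :: 'k::field kchain set)"
proof
  fix c :: "'k kchain" assume "c \<in> cycles_lift V E i j"
  then have c: "c \<in> kchains V i j" and dc: "kdiff V c \<in> ideal_chains V E (i - 1) j"
    unfolding cycles_lift_def by auto
  have "\<exists>g. chain_supported {F. F \<subseteq> exponent_support \<alpha> \<and> card F = Suc i} g \<and>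
      (\<forall>F. F \<subseteq> exponent_support \<alpha> \<longrightarrow> \<not> in_edge_ideal E (minus_face \<alpha> F)
         \<longrightarrow> strand c \<alpha> F = chain_boundary (exponent_support \<alpha>) g F)" if \<alpha>: "is_multidegree V j \<alpha>" for \<alpha>
  proof -
    have \<alpha>V: "\<forall>v. v \<notin> V \<longrightarrow> \<alpha> v = 0" using \<alpha> unfolding is_multidegree_def by blast
    have "chain_supported {F. F \<subseteq> exponent_support \<alpha> \<and> card F = i} (strand c \<alpha>)"
      using c unfolding chain_supported_def strand_def kchains_def kbasis_def by auto
    moreover have "chain_boundary (exponent_support \<alpha>) (strand c \<alpha>) F = 0"
      if "F \<subseteq> exponent_support \<alpha>" "\<not> in_edge_ideal E (minus_face \<alpha> F)" for F
      using kdiff_strand[OF V \<alpha>V that(1), of c] dc that(2) unfolding ideal_chains_def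
      by (metis (mono_tags, lifting) mem_Collect_eq)
    ultimately show ?thesis using strands[OF \<alpha>] unfolding relative_homology_vanishes_def by blast
  qed
  then obtain g where g: "\<And>\<alpha>. is_multidegree V j \<alpha> \<Longrightarrow>
      chain_supported {F. F \<subseteq> exponent_support \<alpha> \<and> card F = Suc i} (g \<alpha>) \<and>
      (\<forall>F. F \<subseteq> exponent_support \<alpha> \<longrightarrow> \<not> in_edge_ideal E (minus_face \<alpha> F)
         \<longrightarrow> strand c \<alpha> F = chain_boundary (exponent_support \<alpha>) (g \<alpha>) F)"
    by metis
  define h where "h = glue_strands V j g"
  have hk: "h \<in> kchains V (Suc i) j" unfolding h_def using g by (intro glue_strands_kchains[OF V]) blast
  define b where "b = c - kdiff V h"
  have bk: "b \<in> kchains V i j" using c kdiff_kchains[OF V hk] unfolding b_def kchains_def by auto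
  have "in_edge_ideal E m" if nz: "b (m, F) \<noteq> 0" for m F
  proof (rule ccontr)
    assume ni: "\<not> in_edge_ideal E m"
    define \<alpha> where "\<alpha> = plus_face m F"
    have "(m, F) \<in> kbasis V i j" using nz bk unfolding kchains_def by blast
    then have \<alpha>: "is_multidegree V j \<alpha>" unfolding \<alpha>_def by (rule kbasis_imp_multidegree[OF V])
    then have \<alpha>V: "\<forall>v. v \<notin> V \<longrightarrow> \<alpha> v = 0" unfolding is_multidegree_def by blast
    have F: "F \<subseteq> exponent_support \<alpha>" unfolding \<alpha>_def by (rule face_subset_exponent_support)
    have "c (m, F) = strand c \<alpha> F" unfolding strand_def \<alpha>_def using F \<alpha>_def by simp
    also have "\<dots> = chain_boundary (exponent_support \<alpha>) (g \<alpha>) F"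
      using g[OF \<alpha>] F ni unfolding \<alpha>_def by simp
    also have "\<dots> = chain_boundary (exponent_support \<alpha>) (strand h \<alpha>) F"
    proof (rule chain_boundary_cong)
      fix v assume "v \<in> exponent_support \<alpha> - F"
      then have "insert v F \<subseteq> exponent_support \<alpha>" using F by blast
      then show "g \<alpha> (insert v F) = strand h \<alpha> (insert v F)"
        unfolding h_def using strand_glue_strands[OF \<alpha> _, of _ g] by simp
    qed
    also have "\<dots> = kdiff V h (m, F)" using kdiff_strand[OF V \<alpha>V F, of h] unfolding \<alpha>_def by simp
    finally have "b (m, F) = 0" unfolding b_def by simp
    then show False using nz by simp
  qed
  then have "b \<in> ideal_chains V E i j" unfolding ideal_chains_def using bk by blast
  moreover have "c = kdiff V h + b" unfolding b_def by simp
  ultimately show "c \<in> bounds_lift V E i j" unfolding bounds_lift_def using hk by blast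
qed

lemma betti_eq_0_if_strands_acyclic:
  assumes "finite V" and "1 \<le> i"
    and "\<And>\<alpha>. is_multidegree V j \<alpha> \<Longrightarrow>
       relative_homology_vanishes TYPE('k::field) (exponent_support \<alpha>) (\<lambda>F. in_edge_ideal E (minus_face \<alpha> F)) i"
  shows "betti TYPE('k) V E i j = 0"
proof -
  have "cycles_lift V E i j = (bounds_lift V E i j :: 'k kchain set)"
    using cycles_lift_subset_bounds_lift[OF assms(1,3)] bounds_lift_subset_cycles_lift[OF assms(1,2)] by blast
  then show ?thesis unfolding betti_def by simp
qed

lemma block_less:
  assumes "s < s'" "x \<in> block n s" "y \<in> block n s'"
  shows "x < y"
proof -
  have "x < (\<Sum>r<Suc s. n r)" using assms(2) unfolding block_def by auto
  also have "\<dots> \<le> (\<Sum>r<s'. n r)" using assms(1) by (intro sum_mono2) auto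
  also have "\<dots> \<le> y" using assms(3) unfolding block_def by auto
  finally show ?thesis .
qed

lemma block_disjoint: "s \<noteq> s' \<Longrightarrow> block n s \<inter> block n s' = {}"
  using block_less by (metis disjoint_iff less_irrefl nat_neq_iff)

lemma finite_block: "finite (block n s)"
  unfolding block_def by simp

lemma finite_mp_vertices: "finite (mp_vertices t n)"
  unfolding mp_vertices_def using finite_block by blast

lemma mp_edge_subset_iff:
  "(\<exists>E\<in>mp_edges t n a. E \<subseteq> W) \<longleftrightarrow> (\<forall>s<t. a s \<le> card (W \<inter> block n s))"
proof
  assume "\<exists>E\<in>mp_edges t n a. E \<subseteq> W"
  then obtain E where E: "E \<in> mp_edges t n a" "E \<subseteq> W" by blast
  show "\<forall>s<t. a s \<le> card (W \<inter> block n s)"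
  proof (intro allI impI)
    fix s assume "s < t"
    then have "a s = card (E \<inter> block n s)" using E(1) unfolding mp_edges_def by simp
    also have "\<dots> \<le> card (W \<inter> block n s)" using E(2) finite_block[of n s] by (intro card_mono) auto
    finally show "a s \<le> card (W \<inter> block n s)" .
  qed
next
  assume card: "\<forall>s<t. a s \<le> card (W \<inter> block n s)"
  define P where "P s = (SOME P. P \<subseteq> W \<inter> block n s \<and> card P = a s)" for s
  have P: "P s \<subseteq> W \<inter> block n s \<and> card (P s) = a s" if s: "s < t" for s
  proof -
    obtain P' where "P' \<subseteq> W \<inter> block n s" "card P' = a s"
      using card s by (meson obtain_subset_with_card_n)
    then show ?thesis unfolding P_def by (rule someI[where P = "\<lambda>P. P \<subseteq> _ \<and> card P = _", OF conjI])
  qed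
  define E where "E = (\<Union>s<t. P s)"
  have "E \<inter> block n s = P s" if "s < t" for s
  proof
    show "P s \<subseteq> E \<inter> block n s" using P[OF that] that unfolding E_def by blast
    show "E \<inter> block n s \<subseteq> P s"
    proof
      fix x assume "x \<in> E \<inter> block n s"
      then obtain s' where "s' < t" "x \<in> P s'" "x \<in> block n s" unfolding E_def by blast
      then show "x \<in> P s" using P[of s'] block_disjoint[of s' s n] by (cases "s' = s") auto
    qed
  qed
  moreover have "E \<subseteq> mp_vertices t n" using P unfolding E_def mp_vertices_def by blast
  ultimately have "E \<in> mp_edges t n a" using P unfolding mp_edges_def by simp
  moreover have "E \<subseteq> W" using P unfolding E_def by blast
  ultimately show "\<exists>E\<in>mp_edges t n a. E \<subseteq> W" by blast
qed

lemma in_edge_ideal_minus_face_squarefree: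
  assumes "\<forall>v\<in>exponent_support \<alpha>. \<alpha> v = 1" and "F \<subseteq> exponent_support \<alpha>"
  shows "in_edge_ideal E (minus_face \<alpha> F) \<longleftrightarrow> (\<exists>e\<in>E. e \<subseteq> exponent_support \<alpha> - F)"
proof -
  have "1 \<le> minus_face \<alpha> F u \<longleftrightarrow> u \<in> exponent_support \<alpha> - F" for u
    using assms unfolding minus_face_def exponent_support_def by auto
  then show ?thesis unfolding in_edge_ideal_def by blast
qed

lemma mp_relative_homology_vanishes:
  assumes S: "S \<subseteq> mp_vertices t n" "S \<noteq> {}" and edge: "\<exists>E\<in>mp_edges t n a. E \<subseteq> S"
    and i: "1 \<le> i" "card S \<noteq> i + (\<Sum>s<t. a s) - 1"
  shows "relative_homology_vanishes TYPE('k::comm_ring_1) S (\<lambda>F. \<exists>E\<in>mp_edges t n a. E \<subseteq> S - F) i"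
proof -
  define X where "X s = S \<inter> block n s" for s
  define r where "r s = card (X s) - a s" for s
  have finX: "finite (X s)" for s unfolding X_def using finite_block by blast
  have aX: "a s \<le> card (X s)" if "s < t" for s
    using edge that unfolding mp_edge_subset_iff X_def by blast
  interpret ordered_parts X r
    by unfold_locales (use finX block_less in \<open>auto simp: r_def X_def\<close>)
  have U: "(\<Union>s<t. X s) = S" using S(1) unfolding mp_vertices_def X_def by blast
  have "(\<exists>E\<in>mp_edges t n a. E \<subseteq> S - F) \<longleftrightarrow> (\<forall>s<t. card (F \<inter> X s) \<le> r s)" if F: "F \<subseteq> S" for F
  proof -
    have "card ((S - F) \<inter> block n s) = card (X s) - card (F \<inter> X s)" for s
    proof -
      have "(S - F) \<inter> block n s = X s - F \<inter> X s" unfolding X_def by blast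
      then show ?thesis using finX[of s] by (simp add: card_Diff_subset)
    qed
    moreover have "card (F \<inter> X s) \<le> card (X s)" for s using finX[of s] by (intro card_mono) auto
    ultimately show ?thesis unfolding mp_edge_subset_iff r_def using aX by (auto simp: le_diff_conv2)
  qed
  then have faces_eq: "{F. F \<subseteq> S \<and> (\<exists>E\<in>mp_edges t n a. E \<subseteq> S - F)} = skeleta_join X r t"
    unfolding skeleta_join_def U by blast
  have "card S = (\<Sum>s<t. card (X s))"
  proof -
    have "X s \<inter> X s' = {}" if "s \<noteq> s'" for s s' using block_disjoint[OF that] unfolding X_def by blast
    then show ?thesis unfolding U[symmetric] using finX by (subst card_UN_disjoint) auto
  qed
  moreover have "(\<Sum>s<t. a s) \<le> (\<Sum>s<t. card (X s))" using aX by (intro sum_mono) simp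
  moreover have "(\<Sum>s<t. r s) = (\<Sum>s<t. card (X s)) - (\<Sum>s<t. a s)"
    unfolding r_def using aX by (intro sum_subtractf_nat) simp
  ultimately have R: "(\<Sum>s<t. r s) = card S - (\<Sum>s<t. a s)" "(\<Sum>s<t. a s) \<le> card S" by simp_all
  show ?thesis
  proof (rule relative_homology_vanishes_acyclic_subcomplex[where R = "\<Sum>s<t. r s"])
    show "finite S" using S(1) finite_mp_vertices by (rule finite_subset)
    show "(SOME w. w \<in> S) \<in> S" using S(2) by (simp add: some_in_eq)
    show "1 \<le> i" "i - 1 \<noteq> (\<Sum>s<t. r s)" using i R by auto
    show "\<exists>\<gamma>. chain_supported {F. F \<subseteq> S \<and> (\<exists>E\<in>mp_edges t n a. E \<subseteq> S - F)} \<gamma>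
        \<and> (\<forall>F. z F = chain_boundary S \<gamma> F)"
      if "chain_supported {F. F \<subseteq> S \<and> (\<exists>E\<in>mp_edges t n a. E \<subseteq> S - F)} z"
        "\<forall>F. z F \<noteq> 0 \<longrightarrow> card F \<noteq> (\<Sum>s<t. r s)" "\<forall>F. chain_boundary S z F = 0" for z :: "nat set \<Rightarrow> 'k"
      using cycle_is_boundary[of t z] that unfolding faces_eq U by blast
  qed
qed

lemma squarefree_if_no_cone_vertex:
  assumes "\<forall>w\<in>exponent_support \<alpha>. \<exists>F. F \<subseteq> exponent_support \<alpha>
      \<and> in_edge_ideal E (minus_face \<alpha> F) \<and> \<not> in_edge_ideal E (minus_face \<alpha> (insert w F))"
  shows "\<forall>v\<in>exponent_support \<alpha>. \<alpha> v = 1"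
proof (rule ccontr)
  assume "\<not> (\<forall>v\<in>exponent_support \<alpha>. \<alpha> v = 1)"
  then obtain v where "v \<in> exponent_support \<alpha>" "\<alpha> v \<noteq> 1" by blast
  then have v: "v \<in> exponent_support \<alpha>" "2 \<le> \<alpha> v" unfolding exponent_support_def by auto
  have "in_edge_ideal E (minus_face \<alpha> (insert v F))" if "in_edge_ideal E (minus_face \<alpha> F)" for F
    using that by (rule in_edge_ideal_mono) (use v(2) in \<open>auto simp: minus_face_def split: if_splits\<close>)
  then show False using assms v(1) by blast
qed

lemma in_edge_ideal_if_no_cone_vertex:
  assumes "\<forall>w\<in>exponent_support \<alpha>. \<exists>F. F \<subseteq> exponent_support \<alpha>
      \<and> in_edge_ideal E (minus_face \<alpha> F) \<and> \<not> in_edge_ideal E (minus_face \<alpha> (insert w F))"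
    and "exponent_support \<alpha> \<noteq> {}"
  shows "in_edge_ideal E \<alpha>"
proof -
  obtain F where "in_edge_ideal E (minus_face \<alpha> F)" using assms by blast
  then show ?thesis by (rule in_edge_ideal_mono) (auto simp: minus_face_def split: if_splits)
qed

lemma multidegree_squarefree_eq_card:
  assumes "finite V" "is_multidegree V j \<alpha>" "\<forall>v\<in>exponent_support \<alpha>. \<alpha> v = 1"
  shows "j = card (exponent_support \<alpha>)"
proof -
  have \<alpha>: "\<alpha> v = (if v \<in> exponent_support \<alpha> then 1 else 0)" for v
    using assms(3) unfolding exponent_support_def by auto
  have "j = (\<Sum>v\<in>V. \<alpha> v)" using assms(2) unfolding is_multidegree_def by simp
  also have "\<dots> = (\<Sum>v\<in>V. if v \<in> exponent_support \<alpha> then 1 else 0)"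
    by (rule sum.cong[OF refl], subst \<alpha>) (rule refl)
  also have "\<dots> = card (exponent_support \<alpha>)"
    using assms(1,2) exponent_support_subset[of V \<alpha>] unfolding is_multidegree_def
    by (simp add: sum.If_cases Int_absorb1)
  finally show ?thesis .
qed

lemma mp_strand_relative_homology_vanishes:
  assumes \<alpha>: "is_multidegree (mp_vertices t n) j \<alpha>" and i: "1 \<le> i" and j: "j \<noteq> i + (\<Sum>s<t. a s) - 1"
  shows "relative_homology_vanishes TYPE('k::comm_ring_1) (exponent_support \<alpha>)
           (\<lambda>F. in_edge_ideal (mp_edges t n a) (minus_face \<alpha> F)) i"
proof -
  define S where "S = exponent_support \<alpha>"
  define Q where "Q F \<longleftrightarrow> in_edge_ideal (mp_edges t n a) (minus_face \<alpha> F)" for F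
  have SV: "S \<subseteq> mp_vertices t n" using \<alpha> exponent_support_subset unfolding S_def is_multidegree_def by blast
  have finS: "finite S" using SV finite_mp_vertices by (rule finite_subset)
  consider "S = {}" | "\<exists>w\<in>S. \<forall>F. F \<subseteq> S \<longrightarrow> Q F \<longrightarrow> Q (insert w F)"
    | (no_cone) "S \<noteq> {}" "\<forall>w\<in>S. \<exists>F. F \<subseteq> S \<and> Q F \<and> \<not> Q (insert w F)" by blast
  then have "relative_homology_vanishes TYPE('k) S Q i"
  proof cases
    case 1
    then show ?thesis using relative_homology_vanishes_empty[OF i] by simp
  next
    case 2
    then show ?thesis using relative_homology_vanishes_cone[OF finS] by blast
  next
    case no_cone
    have squarefree: "\<forall>v\<in>S. \<alpha> v = 1"
      using squarefree_if_no_cone_vertex[OF no_cone(2)[unfolded S_def Q_def]] unfolding S_def .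
    have Q: "Q F \<longleftrightarrow> (\<exists>E\<in>mp_edges t n a. E \<subseteq> S - F)" if "F \<subseteq> S" for F
      using in_edge_ideal_minus_face_squarefree[of \<alpha> F "mp_edges t n a"] squarefree that
      unfolding Q_def S_def by simp
    have "in_edge_ideal (mp_edges t n a) \<alpha>"
      by (rule in_edge_ideal_if_no_cone_vertex[OF no_cone(2)[unfolded S_def Q_def] no_cone(1)[unfolded S_def]])
    then have "Q {}" unfolding Q_def minus_face_def by simp
    then have "\<exists>E\<in>mp_edges t n a. E \<subseteq> S" using Q[of "{}"] by simp
    moreover have "card S \<noteq> i + (\<Sum>s<t. a s) - 1"
      using multidegree_squarefree_eq_card[OF finite_mp_vertices \<alpha>] squarefree j unfolding S_def by simp
    ultimately have "relative_homology_vanishes TYPE('k) S (\<lambda>F. \<exists>E\<in>mp_edges t n a. E \<subseteq> S - F) i"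
      using mp_relative_homology_vanishes[OF SV no_cone(1) _ i(1)] by blast
    then show ?thesis using relative_homology_vanishes_cong[of S Q, OF Q] by blast
  qed
  then show ?thesis unfolding S_def Q_def .
qed

theorem lemma3p15:
  fixes t :: nat and n a :: "nat \<Rightarrow> nat" and d :: nat
  assumes "t \<ge> 1"
    and "\<forall>s<t. n s \<ge> 1"
    and "\<forall>s<t. a s \<ge> 1"
    and "d = (\<Sum>s<t. a s)"
    and "d \<ge> 2"
  shows "linear_resolution TYPE('k::field) (mp_vertices t n) (mp_edges t n a)
       \<and> (\<forall>i\<ge>1. \<forall>j. betti TYPE('k) (mp_vertices t n) (mp_edges t n a) i j \<noteq> 0
                      \<longrightarrow> j = i + (d - 1))"
proof -
  have betti_0: "betti TYPE('k) (mp_vertices t n) (mp_edges t n a) i j = 0"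
    if i: "1 \<le> i" and j: "j \<noteq> i + d - 1" for i j
    using betti_eq_0_if_strands_acyclic[OF finite_mp_vertices i]
      mp_strand_relative_homology_vanishes[OF _ i] j assms(4) by blast
  then have "linear_resolution TYPE('k) (mp_vertices t n) (mp_edges t n a)"
    unfolding linear_resolution_def by blast
  moreover have "j = i + (d - 1)" if "1 \<le> i" "betti TYPE('k) (mp_vertices t n) (mp_edges t n a) i j \<noteq> 0" for i j
    using betti_0[OF that(1)] that(2) assms(5) by (cases "j = i + d - 1") auto
  ultimately show ?thesis by blast
qed

end
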